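(* Let $m \geq 1$ be an integer and let $q \in (m,m+1)$ be a Pisot number which is also a simple Parry number. Then every Galois conjugate $q'$ of $q$ satisfies $|q'| \geq c_m$. More precisely, if $q' \neq q$ is a real Galois conjugate of $q$, then \[ |q'| \geq \frac{\sqrt{m^2+4}-m}{2} \geq c_m. \]
   Context: A Pisot number is a real algebraic integer $q>1$ all of whose other Galois conjugates have absolute value strictly less than $1$. A real number $q>1$ is a simple Parry number if the greedy $q$-expansion of $1$ is finite, i.e. $1 = \sum_{i=1}^n a_i q^{-i}$ with digits $a_i$ produced by the greedy algorithm (iterating $x \mapsto qx \bmod 1$ from $1$ terminates at $0$). Define $c_1 = \frac{\sqrt{5}-1}{2}$; define $c_2$ to be the absolute value of the root of minimal modulus of $x^4-3x^3+x^2-2x-1$; and for $m \geq 3$ define $c_m = \frac{m+1-\sqrt{m^2+2m-3}}{2}$. *)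

theory Defs
  imports "HOL-Analysis.Analysis" "HOL-Computational_Algebra.Computational_Algebra"
begin

definition real_alg_integer :: "real \<Rightarrow> bool" where
  "real_alg_integer q \<longleftrightarrow>
     (\<exists>p :: int poly. lead_coeff p = 1 \<and> poly (map_poly real_of_int p) q = 0)"

text \<open>Galois conjugates of a real algebraic number q: the complex roots of its
  minimal polynomial, i.e. of an irreducible integer polynomial vanishing at q.\<close>
definition galois_conjugate :: "real \<Rightarrow> complex \<Rightarrow> bool" where
  "galois_conjugate q z \<longleftrightarrow>
     (\<exists>p :: int poly. irreducible p \<and> poly (map_poly real_of_int p) q = 0
                     \<and> poly (map_poly complex_of_int p) z = 0)"

definition pisot :: "real \<Rightarrow> bool" where
  "pisot q \<longleftrightarrow> q > 1 \<and> real_alg_integer q \<and>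
     (\<forall>z. galois_conjugate q z \<and> z \<noteq> complex_of_real q \<longrightarrow> cmod z < 1)"

definition beta_map :: "real \<Rightarrow> real \<Rightarrow> real" where
  "beta_map q x = frac (q * x)"

definition simple_parry :: "real \<Rightarrow> bool" where
  "simple_parry q \<longleftrightarrow> q > 1 \<and> (\<exists>n. ((beta_map q) ^^ n) 1 = 0)"

definition c2_poly :: "complex poly" where
  "c2_poly = [:-1, -2, 1, -3, 1:]"

definition c_const :: "nat \<Rightarrow> real" where
  "c_const m =
     (if m = 1 then (sqrt 5 - 1) / 2
      else if m = 2 then Min {cmod z | z. poly c2_poly z = 0}
      else (real m + 1 - sqrt (real m ^ 2 + 2 * real m - 3)) / 2)"

end

theory Submission
  imports Defs
begin

(* The greedy expansion 1 = a_1/q + ... + a_N/q^N of a simple Parry number q has digits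
   0 <= a_i <= floor q and a_N >= 1, so q is a root of X^N - a_1 X^(N-1) - ... - a_N.  The
   minimal polynomial of q divides this integer polynomial, hence every conjugate z satisfies
   z^N = c_0 + c_1 z + ... + c_(N-1) z^(N-1) with c_0 >= 1 and 0 <= c_j <= m = floor q.
   Taking real parts, c_j Re z^j >= (m/2) (Re z^j - |z|^j), and the geometric-sum estimate
   (1 + r) Re (z + ... + z^k) >= -(r + r^(k+1)) for r = |z| with r^2 + r <= 1 then rules out
   r^2 + m r < 1.  So every conjugate, real or not, has modulus at least the positive root of
   x^2 + m x - 1, which in turn is at least c_m. *)

section \<open>Integer polynomials with a common root\<close>

lemma map_poly_of_int_add:
  "map_poly (of_int :: int \<Rightarrow> 'a::comm_ring_1) (p + q) = map_poly of_int p + map_poly of_int q"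
  by (rule poly_eqI) (simp add: coeff_map_poly)

lemma map_poly_of_int_diff:
  "map_poly (of_int :: int \<Rightarrow> 'a::comm_ring_1) (p - q) = map_poly of_int p - map_poly of_int q"
  by (rule poly_eqI) (simp add: coeff_map_poly)

lemma map_poly_of_int_mult:
  "map_poly (of_int :: int \<Rightarrow> 'a::comm_ring_1) (p * q) = map_poly of_int p * map_poly of_int q"
  by (rule poly_eqI) (simp add: coeff_mult coeff_map_poly)

lemma map_poly_of_int_sum:
  "map_poly (of_int :: int \<Rightarrow> 'a::comm_ring_1) (\<Sum>i\<in>A. f i)
     = (\<Sum>i\<in>A. map_poly of_int (f i))"
  by (induction A rule: infinite_finite_induct) (simp_all add: map_poly_of_int_add)

lemma poly_map_poly_of_int_smult:
  "poly (map_poly (of_int :: int \<Rightarrow> 'a::comm_ring_1) (smult c p)) x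
     = of_int c * poly (map_poly of_int p) x"
  by (simp add: map_poly_smult)

lemma poly_map_poly_of_int_const_nonzero:
  fixes t :: "int poly" and x :: "'a::{comm_ring_1, ring_char_0}"
  assumes "degree t = 0" and "t \<noteq> 0"
  shows "poly (map_poly of_int t) x \<noteq> 0"
proof -
  obtain c where "t = [:c:]" using assms(1) by (rule degree_eq_zeroE)
  with assms(2) show ?thesis by (simp add: map_poly_pCons)
qed

lemma poly_map_poly_of_int_remainder:
  fixes x :: "'a::comm_ring_1"
  assumes "smult c f = g * s + r"
    and "poly (map_poly of_int f) x = 0" and "poly (map_poly of_int g) x = 0"
  shows "poly (map_poly (of_int :: int \<Rightarrow> 'a) r) x = 0"
proof -
  have "poly (map_poly (of_int :: int \<Rightarrow> 'a) (smult c f)) x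
      = poly (map_poly of_int (g * s + r)) x"
    using assms(1) by simp
  with assms(2,3) show ?thesis
    by (simp add: poly_map_poly_of_int_smult map_poly_of_int_add map_poly_of_int_mult)
qed

lemma irreducible_root_degree_le:
  fixes p t :: "int poly" and x :: "'a::{comm_ring_1, ring_char_0}"
  assumes irr: "irreducible p" and p_root: "poly (map_poly of_int p) x = 0"
    and "t \<noteq> 0" and "poly (map_poly of_int t) x = 0"
  shows "degree p \<le> degree t"
  using assms(3,4)
proof (induction "degree t" arbitrary: t rule: less_induct)
  case less
  define r where "r = pseudo_mod p t"
  obtain c s where "c \<noteq> 0" and division: "smult c p = t * s + r"
    using pseudo_mod(1)[OF less.prems(1)] unfolding r_def by blast
  have r_root: "poly (map_poly of_int r) x = 0"
    using poly_map_poly_of_int_remainder[OF division p_root less.prems(2)] .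
  show ?case
  proof (cases "r = 0")
    case False
    then have "degree r < degree t"
      using pseudo_mod(2)[OF less.prems(1)] unfolding r_def by blast
    with less.hyps[OF this False r_root] show ?thesis by simp
  next
    case True
    have "p dvd t * s"
      using division True by (metis add_0_right dvd_smult dvd_refl)
    then have "p dvd t \<or> p dvd s"
      using irreducible_imp_prime_poly[OF irr] prime_elem_dvd_mult_iff by blast
    then show ?thesis
    proof
      assume "p dvd t"
      then show ?thesis using less.prems(1) by (rule dvd_imp_degree_le)
    next
      assume "p dvd s"
      have "p \<noteq> 0" using irr by auto
      then have "s \<noteq> 0" using division True \<open>c \<noteq> 0\<close> by auto
      with \<open>p dvd s\<close> have "degree p \<le> degree s" by (rule dvd_imp_degree_le)
      moreover have "degree p = degree t + degree s"
        using division True \<open>c \<noteq> 0\<close> \<open>s \<noteq> 0\<close> less.prems(1)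
        by (metis add_0_right degree_mult_eq degree_smult_eq)
      ultimately have "degree t = 0" by simp
      with less.prems show ?thesis
        using poly_map_poly_of_int_const_nonzero by blast
    qed
  qed
qed

lemma irreducible_root_dvd:
  fixes p f :: "int poly" and x :: "'a::{comm_ring_1, ring_char_0}"
  assumes irr: "irreducible p" and p_root: "poly (map_poly of_int p) x = 0"
    and f_root: "poly (map_poly of_int f) x = 0"
  shows "p dvd f"
proof -
  have "p \<noteq> 0" using irr by auto
  define r where "r = pseudo_mod f p"
  obtain c s where "c \<noteq> 0" and division: "smult c f = p * s + r"
    using pseudo_mod(1)[OF \<open>p \<noteq> 0\<close>] unfolding r_def by blast
  have "r = 0"
  proof (rule ccontr)
    assume "r \<noteq> 0"
    then have "degree r < degree p"
      using pseudo_mod(2)[OF \<open>p \<noteq> 0\<close>] unfolding r_def by blast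
    moreover have "degree p \<le> degree r"
      using irreducible_root_degree_le[OF irr p_root \<open>r \<noteq> 0\<close>]
        poly_map_poly_of_int_remainder[OF division f_root p_root] by blast
    ultimately show False by simp
  qed
  then have "p dvd [:c:] * f" using division by simp
  then have "p dvd [:c:] \<or> p dvd f"
    using irreducible_imp_prime_poly[OF irr] prime_elem_dvd_mult_iff by blast
  moreover have "\<not> p dvd [:c:]"
  proof
    assume "p dvd [:c:]"
    then have "degree p = 0" using \<open>c \<noteq> 0\<close> dvd_imp_degree_le[of p "[:c:]"] by simp
    with \<open>p \<noteq> 0\<close> p_root show False using poly_map_poly_of_int_const_nonzero by blast
  qed
  ultimately show ?thesis by blast
qed

lemma galois_conjugate_root:
  assumes "galois_conjugate q z" and "poly (map_poly real_of_int f) q = 0"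
  shows "poly (map_poly complex_of_int f) z = 0"
proof -
  obtain p :: "int poly" where irr: "irreducible p" and "poly (map_poly real_of_int p) q = 0"
    and z_root: "poly (map_poly complex_of_int p) z = 0"
    using assms(1) unfolding galois_conjugate_def by blast
  then have "p dvd f" using irreducible_root_dvd assms(2) by blast
  then obtain h where "f = p * h" by (elim dvdE)
  with z_root show ?thesis by (simp add: map_poly_of_int_mult)
qed

section \<open>The greedy expansion of 1\<close>

(* greedy_digit q i is the digit a_(i+1) of the expansion 1 = a_1/q + a_2/q^2 + ... *)
definition greedy_digit :: "real \<Rightarrow> nat \<Rightarrow> int" where
  "greedy_digit q i = \<lfloor>q * (beta_map q ^^ i) 1\<rfloor>"

lemma beta_orbit_Suc:
  "(beta_map q ^^ Suc k) 1 = q * (beta_map q ^^ k) 1 - of_int (greedy_digit q k)"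
  by (simp add: beta_map_def greedy_digit_def frac_def)

lemma beta_orbit_bounds: "0 \<le> (beta_map q ^^ k) 1 \<and> (beta_map q ^^ k) 1 \<le> 1"
  by (cases k) (simp_all add: beta_map_def frac_ge_0 less_imp_le[OF frac_lt_1])

lemma greedy_digit_bounds:
  assumes "0 \<le> q"
  shows "0 \<le> greedy_digit q i \<and> greedy_digit q i \<le> \<lfloor>q\<rfloor>"
proof -
  have "0 \<le> q * (beta_map q ^^ i) 1" "q * (beta_map q ^^ i) 1 \<le> q"
    using assms beta_orbit_bounds[where q=q and k=i] by (simp_all add: mult_left_le)
  then show ?thesis unfolding greedy_digit_def by (simp add: floor_mono)
qed

lemma beta_orbit_expansion:
  "(beta_map q ^^ k) 1 = q ^ k - (\<Sum>j<k. of_int (greedy_digit q (k - 1 - j)) * q ^ j)"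
proof (induction k)
  case 0
  then show ?case by simp
next
  case (Suc k)
  have "(\<Sum>j<Suc k. of_int (greedy_digit q (Suc k - 1 - j)) * q ^ j)
      = of_int (greedy_digit q k) + q * (\<Sum>j<k. of_int (greedy_digit q (k - 1 - j)) * q ^ j)"
    by (subst sum.lessThan_Suc_shift) (simp add: sum_distrib_left algebra_simps)
  then show ?case
    by (simp only: beta_orbit_Suc Suc.IH) (simp add: algebra_simps)
qed

lemma simple_parry_digit_equation:
  assumes "simple_parry q"
  obtains N c where "1 \<le> c 0" and "\<And>j. 0 \<le> c j \<and> c j \<le> \<lfloor>q\<rfloor>"
    and "q ^ N = (\<Sum>j<N. of_int (c j) * q ^ j)"
proof -
  let ?x = "\<lambda>k. (beta_map q ^^ k) 1"
  have "q > 1" and "\<exists>n. ?x n = 0" using assms unfolding simple_parry_def by auto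
  define N where "N = (LEAST n. ?x n = 0)"
  have "?x N = 0" unfolding N_def using \<open>\<exists>n. ?x n = 0\<close> by (rule LeastI_ex)
  then obtain k where N: "N = Suc k" by (cases N) simp_all
  have "k < N" using N by simp
  then have "?x k \<noteq> 0" unfolding N_def by (rule not_less_Least)
  then have "0 < q * ?x k" using \<open>q > 1\<close> beta_orbit_bounds[where q=q and k=k] by simp
  moreover have "q * ?x k = of_int (greedy_digit q k)"
    using \<open>?x N = 0\<close> beta_orbit_Suc[where q=q and k=k] unfolding N by simp
  ultimately have "1 \<le> greedy_digit q (N - 1 - 0)" unfolding N by simp
  moreover have "0 \<le> greedy_digit q (N - 1 - j) \<and> greedy_digit q (N - 1 - j) \<le> \<lfloor>q\<rfloor>" for j
    using \<open>q > 1\<close> by (simp add: greedy_digit_bounds)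
  moreover have "q ^ N = (\<Sum>j<N. of_int (greedy_digit q (N - 1 - j)) * q ^ j)"
    using \<open>?x N = 0\<close> beta_orbit_expansion[where q=q and k=N] by simp
  ultimately show ?thesis by (rule that)
qed

lemma simple_parry_conjugate_digit_equation:
  assumes "simple_parry q" and "galois_conjugate q z"
  obtains N c where "1 \<le> c 0" and "\<And>j. 0 \<le> c j \<and> c j \<le> \<lfloor>q\<rfloor>"
    and "z ^ N = (\<Sum>j<N. of_int (c j) * z ^ j)"
proof -
  obtain N c where "1 \<le> c 0" and digits: "\<And>j. 0 \<le> c j \<and> c j \<le> \<lfloor>q\<rfloor>"
    and q_eq: "q ^ N = (\<Sum>j<N. of_int (c j) * q ^ j)"
    using simple_parry_digit_equation[OF assms(1)] by blast
  define f :: "int poly" where "f = monom 1 N - (\<Sum>j<N. monom (c j) j)"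
  have eval: "poly (map_poly of_int f) y = y ^ N - (\<Sum>j<N. of_int (c j) * y ^ j)"
    for y :: "'a::comm_ring_1"
    by (simp add: f_def map_poly_of_int_diff map_poly_of_int_sum map_poly_monom poly_monom poly_sum)
  have "poly (map_poly real_of_int f) q = 0" using q_eq by (simp add: eval)
  with assms(2) have "poly (map_poly complex_of_int f) z = 0" by (rule galois_conjugate_root)
  then have "z ^ N = (\<Sum>j<N. of_int (c j) * z ^ j)" by (simp add: eval)
  with \<open>1 \<le> c 0\<close> digits show ?thesis by (rule that)
qed

section \<open>Roots of digit polynomials\<close>

lemma one_minus_times_sum_powers:
  fixes x :: "'a::comm_ring_1"
  shows "(1 - x) * (\<Sum>j=1..k. x ^ j) = x - x ^ Suc k"
proof (induction k)
  case 0
  then show ?case by simp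
next
  case (Suc k)
  have "(1 - x) * (\<Sum>j=1..Suc k. x ^ j) = (1 - x) * (\<Sum>j=1..k. x ^ j) + (1 - x) * x ^ Suc k"
    by (simp add: distrib_left)
  also have "\<dots> = x - x ^ Suc (Suc k)"
    unfolding Suc.IH by (simp add: algebra_simps)
  finally show ?case .
qed

lemma Re_geometric_sum_lower_bound:
  fixes z :: complex
  shows "Re z - cmod z ^ 2 - cmod z ^ Suc k * cmod (1 - z)
           \<le> cmod (1 - z) ^ 2 * Re (\<Sum>j=1..k. z ^ j)"
proof -
  define w where "w = z * cnj (1 - z)"
  have "of_real (cmod (1 - z) ^ 2) * (\<Sum>j=1..k. z ^ j)
      = cnj (1 - z) * ((1 - z) * (\<Sum>j=1..k. z ^ j))"
    unfolding complex_norm_square by (simp only: ac_simps)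
  also have "\<dots> = w - z ^ k * w"
    unfolding one_minus_times_sum_powers w_def by (simp add: algebra_simps)
  finally have "Re (of_real (cmod (1 - z) ^ 2) * (\<Sum>j=1..k. z ^ j)) = Re (w - z ^ k * w)"
    by (rule arg_cong)
  then have "cmod (1 - z) ^ 2 * Re (\<Sum>j=1..k. z ^ j) = Re w - Re (z ^ k * w)"
    by simp
  moreover have "Re w = Re z - cmod z ^ 2"
    unfolding w_def cmod_power2 by (simp add: algebra_simps power2_eq_square)
  moreover have "Re (z ^ k * w) \<le> cmod z ^ Suc k * cmod (1 - z)"
  proof -
    have "cmod (z ^ k * w) = cmod z ^ Suc k * cmod (1 - z)"
      by (simp only: w_def norm_mult norm_power complex_mod_cnj power_Suc ac_simps)
    then show ?thesis using complex_Re_le_cmod[of "z ^ k * w"] by simp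
  qed
  ultimately show ?thesis by linarith
qed

(* The real-variable core of Re_geometric_sum_ge, for x = Re z, r = |z|, d = |1 - z| and
   s = |z|^(k+1); the first hypothesis is the law of cosines. *)
lemma Re_geometric_sum_ge_core:
  fixes r s d x :: real
  assumes d_sq: "d ^ 2 = 1 - 2 * x + r ^ 2" and "0 \<le> d" and "d \<le> 1 + r"
    and "s \<le> r ^ 2" and small: "r ^ 2 + r \<le> 1"
  shows "0 \<le> (1 + r) * (x - r ^ 2 - s * d) + (r + s) * d ^ 2"
proof -
  have "s * d \<le> r ^ 2 * d" using \<open>s \<le> r ^ 2\<close> \<open>0 \<le> d\<close> by (simp add: mult_right_mono)
  also have "\<dots> \<le> (1 - r) * d" using small \<open>0 \<le> d\<close> by (simp add: mult_right_mono)
  finally have "s * d \<le> (1 - r) * d" .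
  moreover have "0 \<le> 1 - r" using small by (smt (verit) zero_le_power2)
  with \<open>d \<le> 1 + r\<close> have "0 \<le> (1 - r) * (1 + r - d)" by simp
  ultimately have "2 * (s * d) \<le> (1 - r) * (1 + r + d)"
    by (simp add: algebra_simps)
  with \<open>d \<le> 1 + r\<close> have "0 \<le> (1 + r - d) * ((1 - r) * (1 + r + d) - 2 * (s * d))"
    by simp
  also have "\<dots> = 2 * ((1 + r) * (x - r ^ 2 - s * d) + (r + s) * d ^ 2)"
    using d_sq by algebra
  finally show ?thesis by simp
qed

lemma Re_geometric_sum_ge:
  fixes z :: complex
  assumes small: "cmod z ^ 2 + cmod z \<le> 1"
  shows "- (cmod z + cmod z ^ Suc k) \<le> (1 + cmod z) * Re (\<Sum>j=1..k. z ^ j)"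
proof (cases "k = 0")
  case True
  then show ?thesis by simp
next
  case False
  define r d x s where "r = cmod z" and "d = cmod (1 - z)" and "x = Re z" and "s = cmod z ^ Suc k"
  define S where "S = Re (\<Sum>j=1..k. z ^ j)"
  have "0 \<le> r" and "r \<le> 1" using small by (simp_all add: r_def) (smt (verit) zero_le_power2)
  with False have "s \<le> r ^ 2" unfolding s_def r_def by (intro power_decreasing) simp_all
  have "z \<noteq> 1" using small by auto
  then have "0 < d" by (simp add: d_def)
  have "d \<le> 1 + r" using norm_triangle_ineq4[of 1 z] by (simp add: d_def r_def)
  have "d ^ 2 = 1 - 2 * x + r ^ 2"
    unfolding d_def x_def r_def cmod_power2 by (simp add: power2_eq_square algebra_simps)
  with \<open>0 < d\<close> \<open>d \<le> 1 + r\<close> \<open>s \<le> r ^ 2\<close> small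
  have "0 \<le> (1 + r) * (x - r ^ 2 - s * d) + (r + s) * d ^ 2"
    by (intro Re_geometric_sum_ge_core) (simp_all add: r_def)
  moreover have "(1 + r) * (x - r ^ 2 - s * d) \<le> (1 + r) * (d ^ 2 * S)"
    using Re_geometric_sum_lower_bound[of z k] \<open>0 \<le> r\<close>
    by (intro mult_left_mono) (simp_all add: r_def d_def x_def s_def S_def)
  ultimately have "0 \<le> d ^ 2 * ((1 + r) * S + (r + s))"
    by (simp add: algebra_simps)
  then have "0 \<le> (1 + r) * S + (r + s)"
    using \<open>0 < d\<close> by (simp add: zero_le_mult_iff)
  then show ?thesis by (simp add: r_def s_def S_def)
qed

lemma mult_Re_lower_bound:
  fixes w :: complex and c m :: real
  assumes "0 \<le> c" and "c \<le> m"
  shows "m / 2 * (Re w - cmod w) \<le> c * Re w"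
proof (cases "0 \<le> Re w")
  case True
  have "m / 2 * (Re w - cmod w) \<le> 0"
    using assms complex_Re_le_cmod[of w] by (simp add: mult_nonneg_nonpos)
  also have "0 \<le> c * Re w" using assms(1) True by simp
  finally show ?thesis .
next
  case False
  have "m / 2 * (Re w - cmod w) = m * Re w - m / 2 * (Re w + cmod w)"
    by (simp add: field_simps)
  also have "\<dots> \<le> m * Re w"
    using assms abs_Re_le_cmod[of w] by simp
  also have "\<dots> \<le> c * Re w"
    using assms(2) False by (simp add: mult_right_mono_neg)
  finally show ?thesis .
qed

lemma Re_digit_equation_ge:
  fixes z :: complex and c :: "nat \<Rightarrow> real" and m :: real
  assumes "1 \<le> c 0" and digits: "\<And>j. 0 < j \<Longrightarrow> 0 \<le> c j \<and> c j \<le> m"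
    and root: "z ^ Suc k = (\<Sum>j<Suc k. of_real (c j) * z ^ j)"
  shows "1 + m / 2 * (Re (\<Sum>j=1..k. z ^ j) - (\<Sum>j=1..k. cmod z ^ j)) \<le> cmod z ^ Suc k"
proof -
  have "Re (z ^ Suc k) = c 0 + (\<Sum>j=1..k. c j * Re (z ^ j))"
    using arg_cong[OF root, of Re]
    unfolding lessThan_Suc_atMost atMost_atLeast0 sum.atLeast_Suc_atMost[OF le0]
    by (simp add: Re_sum)
  moreover have "m / 2 * (Re (\<Sum>j=1..k. z ^ j) - (\<Sum>j=1..k. cmod z ^ j))
      = (\<Sum>j=1..k. m / 2 * (Re (z ^ j) - cmod (z ^ j)))"
    by (simp only: Re_sum norm_power sum_distrib_left sum_subtractf right_diff_distrib)
  moreover have "\<dots> \<le> (\<Sum>j=1..k. c j * Re (z ^ j))"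
    using digits by (intro sum_mono mult_Re_lower_bound) auto
  moreover have "Re (z ^ Suc k) \<le> cmod z ^ Suc k"
    using complex_Re_le_cmod[of "z ^ Suc k"] unfolding norm_power .
  ultimately show ?thesis using \<open>1 \<le> c 0\<close> by linarith
qed

lemma digit_polynomial_root_norm_ge:
  fixes z :: complex and c :: "nat \<Rightarrow> real" and m :: real
  assumes "1 \<le> m" and "1 \<le> c 0" and digits: "\<And>j. 0 < j \<Longrightarrow> 0 \<le> c j \<and> c j \<le> m"
    and root: "z ^ N = (\<Sum>j<N. of_real (c j) * z ^ j)"
  shows "1 \<le> cmod z ^ 2 + m * cmod z"
proof (rule ccontr)
  define r where "r = cmod z"
  assume "\<not> 1 \<le> cmod z ^ 2 + m * cmod z"
  then have less: "r ^ 2 + m * r < 1" by (simp add: r_def)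
  have "0 \<le> r" by (simp add: r_def)
  have "r \<le> m * r" using \<open>1 \<le> m\<close> \<open>0 \<le> r\<close> by (simp add: mult_le_cancel_right1)
  with less have small: "r ^ 2 + r \<le> 1" by linarith
  with \<open>r \<le> m * r\<close> less have "r < 1" by (smt (verit) zero_le_power2)
  obtain k where N: "N = Suc k" using root by (cases N) simp_all
  define S A where "S = Re (\<Sum>j=1..k. z ^ j)" and "A = (\<Sum>j=1..k. r ^ j)"
  have main: "m / 2 * (S - A) \<le> r ^ N - 1"
    using Re_digit_equation_ge[OF \<open>1 \<le> c 0\<close> digits root[unfolded N]]
    by (simp add: N S_def A_def r_def)
  have "- (r + r ^ N) \<le> (1 + r) * S"
    using Re_geometric_sum_ge[OF small[unfolded r_def]] by (simp add: N S_def r_def)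
  moreover have "(1 - r) * A = r - r ^ N"
    unfolding A_def N by (rule one_minus_times_sum_powers)
  ultimately have "(1 - r) * (- (r + r ^ N)) - (1 + r) * (r - r ^ N)
      \<le> (1 - r) * ((1 + r) * S) - (1 + r) * ((1 - r) * A)"
    using \<open>r < 1\<close> by (simp add: mult_left_mono)
  then have "- 2 * r * (1 - r ^ N) \<le> (1 - r ^ 2) * (S - A)"
    by (simp add: algebra_simps power2_eq_square)
  then have "m / 2 * (- 2 * r * (1 - r ^ N)) \<le> m / 2 * ((1 - r ^ 2) * (S - A))"
    using \<open>1 \<le> m\<close> by (intro mult_left_mono) simp_all
  then have "- m * r * (1 - r ^ N) \<le> (1 - r ^ 2) * (m / 2 * (S - A))"
    by (simp add: algebra_simps)
  also have "\<dots> \<le> (1 - r ^ 2) * (r ^ N - 1)"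
    using main \<open>r < 1\<close> \<open>0 \<le> r\<close> by (intro mult_left_mono) (simp_all add: power_le_one)
  finally have "(1 - r ^ 2) * (1 - r ^ N) \<le> m * r * (1 - r ^ N)"
    by (simp add: algebra_simps)
  moreover have "r ^ N < 1"
  proof -
    have "r * r ^ k \<le> r" using \<open>r < 1\<close> \<open>0 \<le> r\<close> by (simp add: mult_left_le power_le_one)
    with \<open>r < 1\<close> show ?thesis unfolding N by simp
  qed
  then have "m * r * (1 - r ^ N) < (1 - r ^ 2) * (1 - r ^ N)"
    using less by (intro mult_strict_right_mono) simp_all
  ultimately show False by simp
qed

lemma positive_root_le_of_quadratic_ge:
  fixes m x :: real
  assumes "0 \<le> m" and "0 \<le> x" and "1 \<le> x ^ 2 + m * x"
  shows "(sqrt (m ^ 2 + 4) - m) / 2 \<le> x"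
proof (rule ccontr)
  define r where "r = (sqrt (m ^ 2 + 4) - m) / 2"
  assume "\<not> r \<le> x"
  have "r ^ 2 + m * r = (sqrt (m ^ 2 + 4) ^ 2 - m ^ 2) / 4"
    unfolding r_def by (simp add: power2_eq_square field_simps)
  also have "\<dots> = 1" by simp
  finally have "r ^ 2 + m * r = 1" .
  moreover have "x ^ 2 < r ^ 2" using \<open>\<not> r \<le> x\<close> \<open>0 \<le> x\<close> by (simp add: power_strict_mono)
  moreover have "m * x \<le> m * r" using \<open>\<not> r \<le> x\<close> \<open>0 \<le> m\<close> by (simp add: mult_left_mono)
  ultimately show False using assms(3) by linarith
qed

theorem simple_parry_conjugate_norm_ge:
  assumes "simple_parry q" and "galois_conjugate q z"
  shows "(sqrt (of_int \<lfloor>q\<rfloor> ^ 2 + 4) - of_int \<lfloor>q\<rfloor>) / 2 \<le> cmod z"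
proof -
  obtain N c where "1 \<le> c 0" and digits: "\<And>j. 0 \<le> c j \<and> c j \<le> \<lfloor>q\<rfloor>"
    and root: "z ^ N = (\<Sum>j<N. of_int (c j) * z ^ j)"
    using simple_parry_conjugate_digit_equation[OF assms] by blast
  have "1 \<le> \<lfloor>q\<rfloor>" using assms(1) by (simp add: simple_parry_def)
  have "1 \<le> cmod z ^ 2 + of_int \<lfloor>q\<rfloor> * cmod z"
  proof (rule digit_polynomial_root_norm_ge)
    show "z ^ N = (\<Sum>j<N. of_real (of_int (c j)) * z ^ j)" using root by simp
  qed (use \<open>1 \<le> c 0\<close> \<open>1 \<le> \<lfloor>q\<rfloor>\<close> digits in auto)
  then show ?thesis using \<open>1 \<le> \<lfloor>q\<rfloor>\<close> by (intro positive_root_le_of_quadratic_ge) simp_all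
qed

section \<open>Comparison with the constants c_m\<close>

lemma c_const_2_le: "c_const 2 \<le> 2 / 5"
proof -
  define f where "f x = x ^ 4 - 3 * x ^ 3 + x ^ 2 - 2 * x - 1" for x :: real
  have "f (-3/10) \<le> 0" and "0 \<le> f (-2/5)" by (simp_all add: f_def eval_nat_numeral)
  moreover have "\<forall>x. -2/5 \<le> x \<and> x \<le> -3/10 \<longrightarrow> isCont f x"
    unfolding f_def by (intro allI impI continuous_intros)
  ultimately obtain x where x: "-2/5 \<le> x" "x \<le> -3/10" and "f x = 0"
    using IVT2[of f "-3/10" 0 "-2/5"] by auto
  have "poly c2_poly (of_real x) = of_real (f x)"
    by (simp add: c2_poly_def f_def algebra_simps power_def numeral_eq_Suc)
  with \<open>f x = 0\<close> have root: "poly c2_poly (of_real x) = 0" by simp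
  have "finite {cmod z | z. poly c2_poly z = 0}"
    using poly_roots_finite[of c2_poly] by (simp add: c2_poly_def)
  moreover have "cmod (of_real x) \<in> {cmod z | z. poly c2_poly z = 0}"
    using root by blast
  ultimately have "c_const 2 \<le> cmod (of_real x)"
    unfolding c_const_def by (simp del: norm_of_real add: Min_le)
  also have "\<dots> \<le> 2 / 5" using x by simp
  finally show ?thesis .
qed

lemma c_const_le:
  assumes "1 \<le> m"
  shows "c_const m \<le> (sqrt (real m ^ 2 + 4) - real m) / 2"
proof -
  consider "m = 1" | "m = 2" | "3 \<le> m" using assms by linarith
  then show ?thesis
  proof cases
    case 1
    then show ?thesis by (simp add: c_const_def)
  next
    case 2
    have "14 / 5 \<le> sqrt 8" by (rule real_le_rsqrt) (simp add: power2_eq_square)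
    with c_const_2_le 2 show ?thesis by simp
  next
    case 3
    define A B where "A = sqrt (real m ^ 2 + 4)" and "B = sqrt (real m ^ 2 + 2 * real m - 3)"
    have "3 \<le> real m" using 3 by simp
    moreover have "0 \<le> real m ^ 2" by simp
    ultimately have "0 \<le> real m ^ 2 + 2 * real m - 3" by linarith
    then have B_sq: "B ^ 2 = real m ^ 2 + 2 * real m - 3" and "0 \<le> B"
      unfolding B_def by simp_all
    have A_sq: "A ^ 2 = real m ^ 2 + 4" and "0 \<le> A" unfolding A_def by simp_all
    have "A ^ 2 \<le> (1 + B) ^ 2"
      using A_sq B_sq \<open>0 \<le> B\<close> \<open>3 \<le> real m\<close> by (simp add: power2_eq_square algebra_simps)
    then have "A \<le> 1 + B" by (rule power2_le_imp_le) (use \<open>0 \<le> B\<close> in simp)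
    have "0 < A + real m" using \<open>0 \<le> A\<close> \<open>3 \<le> real m\<close> by simp
    have "real m + 1 - B = 4 / (real m + 1 + B)"
      using B_sq \<open>0 \<le> B\<close> \<open>3 \<le> real m\<close> by (simp add: field_simps power2_eq_square)
    also have "\<dots> \<le> 4 / (A + real m)"
      using \<open>A \<le> 1 + B\<close> \<open>0 < A + real m\<close> by (intro divide_left_mono) simp_all
    also have "\<dots> = A - real m"
      using A_sq \<open>0 < A + real m\<close> by (simp add: field_simps power2_eq_square)
    finally have "real m + 1 - B \<le> A - real m" .
    with 3 show ?thesis by (simp add: c_const_def A_def B_def)
  qed
qed

theorem theorem2p4:
  fixes m :: nat and q :: real
  assumes "m \<ge> 1"
    and "real m < q" and "q < real m + 1"
    and "pisot q" and "simple_parry q"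
  shows "(\<forall>z. galois_conjugate q z \<longrightarrow> cmod z \<ge> c_const m)
       \<and> (\<forall>r::real. galois_conjugate q (complex_of_real r) \<and> r \<noteq> q \<longrightarrow>
            \<bar>r\<bar> \<ge> (sqrt (real m ^ 2 + 4) - real m) / 2
          \<and> (sqrt (real m ^ 2 + 4) - real m) / 2 \<ge> c_const m)"
proof -
  have "\<lfloor>q\<rfloor> = int m" using assms(2,3) by (intro floor_unique) simp_all
  then have "(sqrt (real m ^ 2 + 4) - real m) / 2 \<le> cmod z" if "galois_conjugate q z" for z
    using simple_parry_conjugate_norm_ge[OF assms(5) that] by simp
  moreover have "c_const m \<le> (sqrt (real m ^ 2 + 4) - real m) / 2"
    using assms(1) by (rule c_const_le)
  ultimately show ?thesis by (metis norm_of_real order.trans)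
qed

end
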